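(* Let $\Gamma\subsetneqq\mathbb{R}^n$ be an open convex cone with vertex at the origin such that $\{\lambda:\lambda_i>0\ \forall i\}\subset\Gamma\subset\{\lambda:\sum_i\lambda_i>0\}$, and let $f$ be a smooth symmetric function on $\Gamma$ with $\frac{\partial f}{\partial\lambda_i}>0$ in $\Gamma$ for all $i$ and $\limsup_{\lambda\to\lambda_0}f(\lambda)<1$ for every $\lambda_0\in\partial\Gamma$. Let $A=\mathrm{diag}(a_1,\dots,a_n)\in\mathcal{A}$ with $0<a_1\leq\cdots\leq a_n$. Let $g:[1,\infty)\to\mathbb{R}$ be the unique smooth function with $(g(w),a_2w,\dots,a_nw)\in\Gamma$ and $f(g(w),a_2w,\dots,a_nw)=1$ for $w\geq1$. For $\delta\geq0$ and $c_2>1$ let $w_{c_2,\delta}(s)$ be the solution on $[1,+\infty)$ of $$\frac{dw}{ds}=\frac{g(w)-a_1w}{(2a_n+\delta)s},\qquad w(1)=c_2.$$ Then for every $s\in[1,+\infty)$, $0<\frac{\partial w_{c_2,\delta}}{\partial c_2}(s)\leq1$ and $\lim_{c_2\to+\infty}w_{c_2,\delta}(s)=+\infty$.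
   Context: $S^+(n)$ is the set of real symmetric positive definite $n\times n$ matrices; for $A\in S^+(n)$, $a=\lambda(A)$ denotes its eigenvalues, $\hat a=\max_ia_i$, $\hat f_\lambda(a)=\max_i\frac{\partial f}{\partial\lambda_i}(a)$, and $\mathcal{A}:=\{A\in S^+(n): f(a)=1,\ \frac{\nabla f(a)\cdot a}{2\hat a\hat f_\lambda(a)}>1\}$. *)

theory Defs
  imports "HOL-Analysis.Analysis"
begin

fun Ck_on :: "nat \<Rightarrow> ('a::real_normed_vector \<Rightarrow> 'b::real_normed_vector) \<Rightarrow> 'a set \<Rightarrow> bool" where
  "Ck_on 0 f S = continuous_on S f"
| "Ck_on (Suc k) f S =
     (\<exists>f'. (\<forall>x\<in>S. (f has_derivative f' x) (at x within S)) \<and> (\<forall>v. Ck_on k (\<lambda>x. f' x v) S))"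

definition smooth_on :: "('a::real_normed_vector \<Rightarrow> 'b::real_normed_vector) \<Rightarrow> 'a set \<Rightarrow> bool" where
  "smooth_on f S \<longleftrightarrow> (\<forall>k. Ck_on k f S)"

definition pd :: "'n::finite \<Rightarrow> (real^'n \<Rightarrow> real) \<Rightarrow> real^'n \<Rightarrow> real" where
  "pd i f x = deriv (\<lambda>t. f (x + t *\<^sub>R axis i 1)) 0"

text \<open>Indices 1 and n of an ordered finite index type.\<close>
definition first_idx :: "'n::{finite,linorder}" where "first_idx = (LEAST i. True)"
definition last_idx :: "'n::{finite,linorder}" where "last_idx = (GREATEST i. True)"

text \<open>Condition defining the set \<A>, expressed on the eigenvalue vector a = \<lambda>(A):
  f(a) = 1 and (\<nabla>f(a)\<cdot>a) / (2 \<hat>a \<hat>f_\<lambda>(a)) > 1.\<close>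
definition in_calA :: "(real^'n::finite \<Rightarrow> real) \<Rightarrow> real^'n \<Rightarrow> bool" where
  "in_calA f a \<longleftrightarrow> f a = 1 \<and>
     (\<Sum>i\<in>UNIV. pd i f a * a $ i) / (2 * Max (range (\<lambda>i. a $ i)) * Max (range (\<lambda>i. pd i f a))) > 1"

end

theory Submission
  imports Defs
begin

text \<open>Put h(v) = (g(v) - a_1 v) / (2 a_n + \<delta>), so that the equation reads w' = h(w) / s.
  As f is strictly increasing in each coordinate on the convex set \<Gamma>, the level curve forces
  g to decrease with g(1) = a_1; hence h vanishes at 1 and decreases strictly, and a solution
  starting at c > 1 decreases in s while staying above 1. Separating variables,
  H(w(s)) = H(c) + ln s for a primitive H of 1/h, and implicit differentiation gives
  dw(s)/dc = h(w(s)) / h(c), which lies in (0,1] because 1 < w(s) \<le> c. Finally the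
  condition \<Gamma> \<subseteq> {\<Sum>\<lambda>_i > 0} bounds h below by -\<beta> v, so w(s) \<ge> c s^(-\<beta>) tends to infinity.\<close>

lemma DERIV_within_Icc_nonneg_imp_le:
  fixes f f' :: "real \<Rightarrow> real"
  assumes "a \<le> b"
    and deriv: "\<And>x. x \<in> {a..b} \<Longrightarrow> (f has_real_derivative f' x) (at x within {a..b})"
    and nonneg: "\<And>x. a < x \<Longrightarrow> x < b \<Longrightarrow> 0 \<le> f' x"
  shows "f a \<le> f b"
proof (rule DERIV_nonneg_imp_increasing_open[OF \<open>a \<le> b\<close>])
  fix x assume x: "a < x" "x < b"
  then have "(f has_real_derivative f' x) (at x)"
    using deriv[of x] at_within_Icc_at[OF x] by auto
  then show "\<exists>y. DERIV f x :> y \<and> 0 \<le> y"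
    using nonneg[OF x] by blast
qed (rule DERIV_continuous_on[OF deriv])

lemma DERIV_within_Icc_nonpos_imp_ge:
  fixes f f' :: "real \<Rightarrow> real"
  assumes "a \<le> b"
    and "\<And>x. x \<in> {a..b} \<Longrightarrow> (f has_real_derivative f' x) (at x within {a..b})"
    and "\<And>x. a < x \<Longrightarrow> x < b \<Longrightarrow> f' x \<le> 0"
  shows "f b \<le> f a"
  using DERIV_within_Icc_nonneg_imp_le[of a b "\<lambda>x. - f x" "\<lambda>x. - f' x"] assms
  by (auto intro!: DERIV_minus)

lemma first_hitting_time:
  fixes u :: "real \<Rightarrow> real"
  assumes cont: "continuous_on {a..b} u" and start: "y < u a" and hit: "u b \<le> y" and "a \<le> b"
  shows "\<exists>S\<in>{a<..b}. u S \<le> y \<and> (\<forall>t\<in>{a..<S}. y < u t)"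
proof -
  define T where "T = {a..b} \<inter> u -` {..y}"
  have "closed T"
    unfolding T_def by (rule continuous_closed_preimage[OF cont]) auto
  moreover have "b \<in> T" and "bdd_below T"
    using hit \<open>a \<le> b\<close> unfolding T_def by (auto intro: bdd_belowI[of _ a])
  ultimately have "Inf T \<in> T"
    using closed_contains_Inf by blast
  moreover have "Inf T \<noteq> a"
    using \<open>Inf T \<in> T\<close> start unfolding T_def by auto
  moreover have "y < u t" if "t \<in> {a..<Inf T}" for t
    using that cInf_lower[OF _ \<open>bdd_below T\<close>, of t] \<open>Inf T \<in> T\<close> unfolding T_def by force
  moreover have "Inf T \<in> {a..b}" "u (Inf T) \<le> y"
    using \<open>Inf T \<in> T\<close> unfolding T_def by auto
  ultimately show ?thesis
    by (intro bexI[of _ "Inf T"]) auto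
qed

lemma times_powr_mono_of_deriv:
  fixes u u' :: "real \<Rightarrow> real"
  assumes "0 < a" "a \<le> b"
    and deriv: "\<And>t. t \<in> {a..b} \<Longrightarrow> (u has_real_derivative u' t) (at t within {a..b})"
    and nonneg: "\<And>t. a < t \<Longrightarrow> t < b \<Longrightarrow> 0 \<le> t * u' t + L * (u t - k)"
  shows "(u a - k) * a powr L \<le> (u b - k) * b powr L"
proof (rule DERIV_within_Icc_nonneg_imp_le[OF \<open>a \<le> b\<close>])
  fix t assume t: "t \<in> {a..b}"
  then have "t > 0" using \<open>0 < a\<close> by simp
  show "((\<lambda>t. (u t - k) * t powr L) has_real_derivative
          u' t * t powr L + (u t - k) * (L * t powr (L - 1))) (at t within {a..b})"
    using \<open>t > 0\<close> by (auto intro!: derivative_eq_intros deriv[OF t])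
next
  fix t assume t: "a < t" "t < b"
  then have "u' t * t powr L + (u t - k) * (L * t powr (L - 1))
               = t powr (L - 1) * (t * u' t + L * (u t - k))"
    using \<open>0 < a\<close> by (simp add: powr_diff field_simps)
  also have "\<dots> \<ge> 0"
    using nonneg[OF t] by simp
  finally show "0 \<le> u' t * t powr L + (u t - k) * (L * t powr (L - 1))" .
qed

lemma DERIV_implicit:
  fixes H K \<phi> :: "real \<Rightarrow> real"
  assumes H: "(H has_real_derivative r) (at (\<phi> c))" and "r \<noteq> 0"
    and "isCont \<phi> c"
    and K: "(K has_real_derivative k) (at c)"
    and level: "\<forall>\<^sub>F x in nhds c. H (\<phi> x) - H (\<phi> c) = K x - K c"
  shows "(\<phi> has_real_derivative k / r) (at c)"
proof -
  obtain q where q: "\<And>z. H z - H (\<phi> c) = q z * (z - \<phi> c)" and "isCont q (\<phi> c)" "q (\<phi> c) = r"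
    using H CARAT_DERIV by blast
  then have q_lim: "((\<lambda>x. q (\<phi> x)) \<longlongrightarrow> r) (at c)"
    using \<open>isCont \<phi> c\<close> isCont_tendsto_compose by (metis isCont_def)
  have "((\<lambda>x. ((K x - K c) / (x - c)) / q (\<phi> x)) \<longlongrightarrow> k / r) (at c)"
    using K \<open>r \<noteq> 0\<close> by (intro tendsto_divide q_lim) (simp_all add: has_field_derivative_iff)
  moreover have "\<forall>\<^sub>F x in at c. ((K x - K c) / (x - c)) / q (\<phi> x) = (\<phi> x - \<phi> c) / (x - c)"
  proof -
    have "\<forall>\<^sub>F x in at c. q (\<phi> x) \<noteq> 0"
      using q_lim \<open>r \<noteq> 0\<close> tendsto_imp_eventually_ne by blast
    moreover have "\<forall>\<^sub>F x in at c. H (\<phi> x) - H (\<phi> c) = K x - K c"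
      using level by (simp add: eventually_at_filter eventually_mono)
    moreover have "\<forall>\<^sub>F x in at c. x \<noteq> c"
      by (simp add: eventually_at_filter)
    ultimately show ?thesis
    proof eventually_elim
      case (elim x)
      then have "K x - K c = q (\<phi> x) * (\<phi> x - \<phi> c)"
        using q by simp
      then show ?case
        using elim by simp
    qed
  qed
  ultimately show ?thesis
    unfolding has_field_derivative_iff by (rule Lim_transform_eventually)
qed

locale log_autonomous_ode =
  fixes h :: "real \<Rightarrow> real" and w :: "real \<Rightarrow> real \<Rightarrow> real"
  assumes h_cont: "continuous_on {1..} h"
    and h_at_1: "h 1 = 0"
    and h_strict_antimono: "strict_antimono_on {1..} h"
    and h_lower_near_1: "\<And>c. 1 < c \<Longrightarrow> \<exists>L. \<forall>v\<in>{1..c}. - (L * (v - 1)) \<le> h v"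
    and w_init: "\<And>c. 1 < c \<Longrightarrow> w c 1 = c"
    and w_ode: "\<And>c t. 1 < c \<Longrightarrow> 1 \<le> t \<Longrightarrow>
                  (w c has_real_derivative h (w c t) / t) (at t within {1..})"
begin

lemma h_neg: "1 < v \<Longrightarrow> h v < 0"
  using monotone_onD[OF h_strict_antimono, of 1 v] h_at_1 by simp

lemma h_antimono: "1 \<le> u \<Longrightarrow> u \<le> v \<Longrightarrow> h v \<le> h u"
  using monotone_onD[OF h_strict_antimono, of u v] by (cases "u = v") auto

lemma w_deriv_Icc:
  "1 < c \<Longrightarrow> 1 \<le> p \<Longrightarrow> t \<in> {p..q} \<Longrightarrow>
     (w c has_real_derivative h (w c t) / t) (at t within {p..q})"
  by (rule DERIV_subset[OF w_ode]) auto

lemma w_cont: "1 < c \<Longrightarrow> continuous_on {1..} (w c)"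
  by (rule DERIV_continuous_on[OF w_ode]) auto

lemma w_antimono_while_gt_1:
  assumes "1 < c" "1 \<le> t" "t \<le> t'" and "\<forall>x\<in>{t<..<t'}. 1 < w c x"
  shows "w c t' \<le> w c t"
proof (rule DERIV_within_Icc_nonpos_imp_ge[OF \<open>t \<le> t'\<close> w_deriv_Icc[OF \<open>1 < c\<close> \<open>1 \<le> t\<close>]])
  fix x assume "t < x" "x < t'"
  then show "h (w c x) / x \<le> 0"
    using assms h_neg[of "w c x"] by (simp add: divide_nonpos_pos)
qed

lemma w_gt_1:
  assumes "1 < c" "1 \<le> t"
  shows "1 < w c t"
proof (rule ccontr)
  \<comment> \<open>Until w first reaches 1 it stays in (1, c], where h(v) \<ge> -L (v - 1); hence
     (w - 1) s^L cannot decrease, although it would pass from c - 1 > 0 to a value \<le> 0.\<close>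
  assume "\<not> 1 < w c t"
  then obtain S where S: "S \<in> {1<..t}" "w c S \<le> 1" and above: "\<forall>x\<in>{1..<S}. 1 < w c x"
    using first_hitting_time[of 1 t "w c" 1] continuous_on_subset[OF w_cont] assms w_init
    by fastforce
  have below: "w c x \<le> c" if "x \<in> {1..<S}" for x
    using w_antimono_while_gt_1[of c 1 x] above that assms w_init by auto
  obtain L where L: "\<forall>v\<in>{1..c}. - (L * (v - 1)) \<le> h v"
    using h_lower_near_1 \<open>1 < c\<close> by blast
  have "(w c 1 - 1) * 1 powr L \<le> (w c S - 1) * S powr L"
  proof (rule times_powr_mono_of_deriv[where u' = "\<lambda>x. h (w c x) / x"])
    show "\<And>x. x \<in> {1..S} \<Longrightarrow> (w c has_real_derivative h (w c x) / x) (at x within {1..S})"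
      using w_deriv_Icc \<open>1 < c\<close> by blast
  next
    fix x assume x: "1 < x" "x < S"
    then have "x \<in> {1..<S}"
      by simp
    then have "w c x \<in> {1..c}"
      using above below[of x] by (auto intro: less_imp_le)
    then have "- (L * (w c x - 1)) \<le> h (w c x)"
      using L by blast
    then show "0 \<le> x * (h (w c x) / x) + L * (w c x - 1)"
      using x by simp
  qed (use S in auto)
  moreover have "(w c S - 1) * S powr L \<le> 0"
    using S by (simp add: mult_nonpos_nonneg)
  ultimately show False
    using w_init \<open>1 < c\<close> by simp
qed

lemma w_antimono: "1 < c \<Longrightarrow> 1 \<le> t \<Longrightarrow> t \<le> t' \<Longrightarrow> w c t' \<le> w c t"
  using w_antimono_while_gt_1 w_gt_1 by simp

lemma w_le_init: "1 < c \<Longrightarrow> 1 \<le> t \<Longrightarrow> w c t \<le> c"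
  using w_antimono[of c 1 t] w_init by simp

lemma w_lower_powr:
  assumes h_linear_lower: "\<And>v. 1 \<le> v \<Longrightarrow> - (\<beta> * v) \<le> h v" and "1 < c" "1 \<le> t"
  shows "c \<le> w c t * t powr \<beta>"
proof -
  have "(w c 1 - 0) * 1 powr \<beta> \<le> (w c t - 0) * t powr \<beta>"
  proof (rule times_powr_mono_of_deriv[where u' = "\<lambda>x. h (w c x) / x"])
    show "\<And>x. x \<in> {1..t} \<Longrightarrow> (w c has_real_derivative h (w c x) / x) (at x within {1..t})"
      using w_deriv_Icc \<open>1 < c\<close> by blast
  next
    fix x assume "1 < x" "x < t"
    then show "0 \<le> x * (h (w c x) / x) + \<beta> * (w c x - 0)"
      using h_linear_lower[of "w c x"] w_gt_1[OF \<open>1 < c\<close>, of x] by simp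
  qed (use \<open>1 \<le> t\<close> in auto)
  then show ?thesis
    using w_init \<open>1 < c\<close> by simp
qed

lemma w_tendsto_at_top:
  assumes "\<And>v. 1 \<le> v \<Longrightarrow> - (\<beta> * v) \<le> h v" and "1 \<le> t"
  shows "filterlim (\<lambda>c. w c t) at_top at_top"
proof (rule filterlim_at_top_mono)
  show "LIM c at_top. inverse (t powr \<beta>) * c :> at_top"
    using \<open>1 \<le> t\<close> by (intro filterlim_tendsto_pos_mult_at_top[OF tendsto_const] filterlim_ident) simp
  show "\<forall>\<^sub>F c in at_top. inverse (t powr \<beta>) * c \<le> w c t"
    using eventually_gt_at_top[of 1]
  proof eventually_elim
    case (elim c)
    then show ?case
      using w_lower_powr[OF assms(1) elim \<open>1 \<le> t\<close>] \<open>1 \<le> t\<close> by (simp add: field_simps)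
  qed
qed

lemma w_lipschitz_init:
  assumes "1 \<le> t"
  shows "1-lipschitz_on {1<..} (\<lambda>c. w c t)"
proof (rule lipschitz_onI)
  fix c c' :: real assume "c \<in> {1<..}" "c' \<in> {1<..}"
  then have "1 < c" "1 < c'" by auto
  define d where "d x = w c x - w c' x" for x
  have "d t * d t \<le> d 1 * d 1"
  proof (rule DERIV_within_Icc_nonpos_imp_ge[OF \<open>1 \<le> t\<close>])
    fix x assume "x \<in> {1..t}"
    then have "(d has_real_derivative h (w c x) / x - h (w c' x) / x) (at x within {1..t})"
      unfolding d_def using w_deriv_Icc \<open>1 < c\<close> \<open>1 < c'\<close> by (intro DERIV_diff) auto
    from DERIV_mult[OF this this]
    show "((\<lambda>x. d x * d x) has_real_derivative
            2 * (d x * (h (w c x) - h (w c' x))) / x) (at x within {1..t})"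
      by (rule DERIV_cong) (simp add: algebra_simps diff_divide_distrib)
  next
    fix x assume "1 < x" "x < t"
    then have "d x * (h (w c x) - h (w c' x)) \<le> 0"
      using h_antimono[of "w c x" "w c' x"] h_antimono[of "w c' x" "w c x"]
        w_gt_1[OF \<open>1 < c\<close>, of x] w_gt_1[OF \<open>1 < c'\<close>, of x] unfolding d_def
      by (cases "w c x \<le> w c' x") (auto simp: mult_nonpos_nonneg mult_nonneg_nonpos)
    then show "2 * (d x * (h (w c x) - h (w c' x))) / x \<le> 0"
      using \<open>1 < x\<close> by (simp add: divide_nonpos_pos)
  qed
  then show "dist (w c t) (w c' t) \<le> 1 * dist c c'"
    using w_init \<open>1 < c\<close> \<open>1 < c'\<close>
    by (simp add: d_def dist_real_def abs_le_square_iff power2_eq_square)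
qed simp

lemma w_separation:
  assumes "1 < m" and H: "\<And>v. m < v \<Longrightarrow> (H has_real_derivative 1 / h v) (at v)"
    and "1 < c" "1 \<le> s" "m < w c s"
  shows "H (w c s) = H c + ln s"
proof -
  have deriv: "((\<lambda>y. H (w c y) - ln y) has_real_derivative 0) (at y within {1..s})"
    if y: "y \<in> {1..s}" for y
  proof -
    have "m < w c y" "h (w c y) \<noteq> 0"
      using w_antimono[OF \<open>1 < c\<close>, of y s] y \<open>m < w c s\<close> w_gt_1[OF \<open>1 < c\<close>, of y]
        h_neg[of "w c y"] by auto
    then have "((\<lambda>y. H (w c y)) has_real_derivative 1 / h (w c y) * (h (w c y) / y))
                 (at y within {1..s})"
      using DERIV_chain2[OF H w_deriv_Icc[OF \<open>1 < c\<close> _ y]] by simp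
    moreover have "(ln has_real_derivative 1 / y) (at y within {1..s})"
      using y by (auto intro!: derivative_eq_intros)
    ultimately have "((\<lambda>y. H (w c y) - ln y) has_real_derivative
                       1 / h (w c y) * (h (w c y) / y) - 1 / y) (at y within {1..s})"
      by (rule DERIV_diff)
    then show ?thesis
      using \<open>h (w c y) \<noteq> 0\<close> by simp
  qed
  obtain C where "\<forall>y\<in>{1..s}. H (w c y) - ln y = C"
    using has_field_derivative_zero_constant[OF convex_real_interval(5) deriv] by blast
  then have "H (w c s) - ln s = H (w c 1) - ln 1"
    using \<open>1 \<le> s\<close> by (metis atLeastAtMost_iff order_refl)
  then show ?thesis
    using w_init[OF \<open>1 < c\<close>] by simp
qed

lemma w_has_derivative_init:
  assumes "1 < c" "1 \<le> s"
  shows "((\<lambda>c. w c s) has_real_derivative h (w c s) / h c) (at c)"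
proof -
  \<comment> \<open>The primitive H of 1/h is based at m > 1, away from the zero of h at 1.\<close>
  define m where "m = (1 + w c s) / 2"
  have "1 < m" "m < w c s" "m < c"
    using w_gt_1[OF assms] w_le_init[OF assms] by (auto simp: m_def)
  define H where "H v = integral {m..v} (\<lambda>v. 1 / h v)" for v
  have H_deriv: "(H has_real_derivative 1 / h u) (at u)" if "m < u" for u
  proof -
    have "h x \<noteq> 0" if "x \<in> {m..u+1}" for x
      using that \<open>1 < m\<close> h_neg[of x] by auto
    then have "continuous_on {m..u+1} (\<lambda>v. 1 / h v)"
      using \<open>1 < m\<close> by (intro continuous_intros continuous_on_subset[OF h_cont]) auto
    then have "(H has_real_derivative 1 / h u) (at u within {m..u+1})"
      unfolding H_def using that by (intro integral_has_real_derivative) auto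
    then show ?thesis
      using at_within_Icc_at[of m u "u+1"] that by simp
  qed
  have cont: "isCont (\<lambda>c. w c s) c"
    using lipschitz_on_continuous_on[OF w_lipschitz_init[OF \<open>1 \<le> s\<close>]] \<open>1 < c\<close>
    by (simp add: continuous_on_eq_continuous_at)
  have "((\<lambda>c. w c s) \<longlongrightarrow> w c s) (nhds c)"
    using cont tendsto_at_iff_tendsto_nhds[of "\<lambda>c. w c s" c] by (simp add: isCont_def)
  then have "\<forall>\<^sub>F c' in nhds c. m < w c' s"
    using order_tendstoD(1) \<open>m < w c s\<close> by blast
  moreover have "\<forall>\<^sub>F c' in nhds c. 1 < c'"
    using eventually_nhds_in_open[of "{1<..}" c] \<open>1 < c\<close> by simp
  ultimately have "\<forall>\<^sub>F c' in nhds c. H (w c' s) - H (w c s) = H c' - H c"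
  proof eventually_elim
    case (elim c')
    then show ?case
      using w_separation[OF \<open>1 < m\<close> H_deriv] assms \<open>m < w c s\<close> by simp
  qed
  then have "((\<lambda>c. w c s) has_real_derivative (1 / h c) / (1 / h (w c s))) (at c)"
    using h_neg[OF w_gt_1[OF assms]]
    by (intro DERIV_implicit[OF H_deriv[OF \<open>m < w c s\<close>] _ cont H_deriv[OF \<open>m < c\<close>]]) auto
  then show ?thesis
    by simp
qed

lemma w_derivative_init_bounds:
  assumes "1 < c" "1 \<le> s"
  shows "0 < h (w c s) / h c" "h (w c s) / h c \<le> 1"
  using h_neg[OF w_gt_1[OF assms]] h_neg[OF \<open>1 < c\<close>]
    h_antimono[OF less_imp_le[OF w_gt_1[OF assms]] w_le_init[OF assms]]
  by (simp_all add: divide_neg_neg divide_le_eq_1_neg)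

end

lemma smooth_on_open_imp_differentiable:
  assumes "smooth_on f S" "open S" "x \<in> S"
  shows "f differentiable (at x)"
proof -
  have "Ck_on (Suc 0) f S"
    using assms(1) unfolding smooth_on_def by blast
  then obtain f' where "\<forall>x\<in>S. (f has_derivative f' x) (at x within S)"
    by auto
  then show ?thesis
    using assms(2,3) at_within_open[of x S] unfolding differentiable_def by metis
qed

lemma smooth_on_real_imp_C1:
  fixes g :: "real \<Rightarrow> real"
  assumes "smooth_on g S"
  shows "\<exists>G. continuous_on S G \<and> (\<forall>x\<in>S. (g has_real_derivative G x) (at x within S))"
proof -
  have "Ck_on (Suc 0) g S"
    using assms unfolding smooth_on_def by blast
  then obtain g' where g': "\<forall>x\<in>S. (g has_derivative g' x) (at x within S)"
    and cont: "\<forall>v. continuous_on S (\<lambda>x. g' x v)"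
    by auto
  have "g' x = (*) (g' x 1)" if "x \<in> S" for x
  proof
    fix y :: real
    have "linear (g' x)"
      using g' that has_derivative_linear by blast
    then show "g' x y = g' x 1 * y"
      using linear_scale[of "g' x" y 1] by simp
  qed
  then show ?thesis
    using g' cont by (intro exI[of _ "\<lambda>x. g' x 1"]) (auto simp: has_field_derivative_def)
qed

lemma smooth_on_imp_lipschitz_on_Icc:
  fixes g :: "real \<Rightarrow> real"
  assumes "smooth_on g S" "{a..b} \<subseteq> S"
  shows "\<exists>B. B-lipschitz_on {a..b} g"
proof -
  obtain G where "continuous_on S G" and G: "\<forall>x\<in>S. (g has_real_derivative G x) (at x within S)"
    using smooth_on_real_imp_C1[OF assms(1)] by blast
  then have "compact (G ` {a..b})"
    by (intro compact_continuous_image continuous_on_subset[OF _ assms(2)]) auto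
  then obtain B where "B > 0" and B: "\<forall>z\<in>G ` {a..b}. norm z \<le> B"
    using bounded_pos[THEN iffD1, OF compact_imp_bounded] by blast
  have "(g has_real_derivative G z) (at z within {a..b})" if "z \<in> {a..b}" for z
    using has_field_derivative_subset G assms(2) that by blast
  then have "norm (g x - g y) \<le> B * norm (x - y)" if "x \<in> {a..b}" "y \<in> {a..b}" for x y
    by (rule field_differentiable_bound[OF convex_real_interval(5)]) (use B that in auto)
  then have "B-lipschitz_on {a..b} g"
    using \<open>B > 0\<close> by (intro lipschitz_onI) (auto simp: dist_norm)
  then show ?thesis ..
qed

lemma has_real_derivative_along_line:
  fixes f :: "'a::real_normed_vector \<Rightarrow> real"
  assumes "f differentiable (at (x + t *\<^sub>R d))"
  shows "((\<lambda>t. f (x + t *\<^sub>R d)) has_real_derivative frechet_derivative f (at (x + t *\<^sub>R d)) d) (at t)"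
proof -
  have "((\<lambda>t. x + t *\<^sub>R d) has_derivative (\<lambda>s. s *\<^sub>R d)) (at t)"
    by (auto intro!: derivative_eq_intros)
  from has_derivative_compose[OF this assms[unfolded frechet_derivative_works]]
  show ?thesis
    using linear_scale[OF linear_frechet_derivative[OF assms]]
    by (simp add: has_field_derivative_def mult.commute[of _ "frechet_derivative f _ d"])
qed

lemma pd_eq_frechet_derivative:
  fixes f :: "real^'n \<Rightarrow> real"
  assumes "f differentiable (at p)"
  shows "pd i f p = frechet_derivative f (at p) (axis i 1)"
  unfolding pd_def using has_real_derivative_along_line[of f p 0 "axis i 1"] assms
  by (simp add: DERIV_imp_deriv)

lemma frechet_derivative_eq_sum_pd:
  fixes f :: "real^'n \<Rightarrow> real"
  assumes "f differentiable (at p)"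
  shows "frechet_derivative f (at p) d = (\<Sum>i\<in>UNIV. d $ i * pd i f p)"
proof -
  have lin: "linear (frechet_derivative f (at p))"
    using linear_frechet_derivative[OF assms] .
  have "frechet_derivative f (at p) d = frechet_derivative f (at p) (\<Sum>i\<in>UNIV. d $ i *\<^sub>R axis i 1)"
    using basis_expansion[of d] by (simp add: scalar_mult_eq_scaleR)
  also have "\<dots> = (\<Sum>i\<in>UNIV. d $ i * frechet_derivative f (at p) (axis i 1))"
    by (simp add: linear_sum[OF lin] linear_scale[OF lin])
  finally show ?thesis
    using pd_eq_frechet_derivative[OF assms] by simp
qed

lemma pd_pos_imp_strict_mono_on:
  fixes f :: "real^'n \<Rightarrow> real"
  assumes "open \<Gamma>" "convex \<Gamma>"
    and diff: "\<And>x. x \<in> \<Gamma> \<Longrightarrow> f differentiable (at x)"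
    and pd_pos: "\<And>x i. x \<in> \<Gamma> \<Longrightarrow> 0 < pd i f x"
  shows "strict_mono_on \<Gamma> f"
proof (rule strict_mono_onI)
  fix x y assume "x \<in> \<Gamma>" "y \<in> \<Gamma>" "x < y"
  then have le: "\<forall>i. x $ i \<le> y $ i" and "\<exists>j. x $ j < y $ j"
    by (auto simp: less_vec_def less_eq_vec_def not_le)
  then obtain j where "x $ j < y $ j"
    by blast
  define p where "p t = x + t *\<^sub>R (y - x)" for t
  have "(\<lambda>t. f (p t)) 0 < (\<lambda>t. f (p t)) 1"
  proof (rule DERIV_pos_imp_increasing[of 0 1 "\<lambda>t. f (p t)"])
    fix t :: real assume "0 \<le> t" "t \<le> 1"
    then have "p t \<in> \<Gamma>"
      using convexD[OF \<open>convex \<Gamma>\<close> \<open>x \<in> \<Gamma>\<close> \<open>y \<in> \<Gamma>\<close>, of "1 - t" t]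
      by (simp add: p_def algebra_simps)
    have "((\<lambda>t. f (p t)) has_real_derivative frechet_derivative f (at (p t)) (y - x)) (at t)"
      using has_real_derivative_along_line diff[OF \<open>p t \<in> \<Gamma>\<close>] unfolding p_def by blast
    moreover have "0 < frechet_derivative f (at (p t)) (y - x)"
    proof -
      have "0 < (y - x) $ j * pd j f (p t)"
        using \<open>x $ j < y $ j\<close> pd_pos[OF \<open>p t \<in> \<Gamma>\<close>] by simp
      also have "\<dots> \<le> (\<Sum>i\<in>UNIV. (y - x) $ i * pd i f (p t))"
        using le pd_pos[OF \<open>p t \<in> \<Gamma>\<close>] by (intro member_le_sum) (simp_all add: less_imp_le)
      finally show ?thesis
        using frechet_derivative_eq_sum_pd[OF diff[OF \<open>p t \<in> \<Gamma>\<close>]] by simp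
    qed
    ultimately show "\<exists>D. ((\<lambda>t. f (p t)) has_real_derivative D) (at t) \<and> 0 < D"
      by blast
  qed simp
  moreover have "p 0 = x" "p 1 = y"
    by (simp_all add: p_def)
  ultimately show "f x < f y"
    by simp
qed

lemma level_curve_at_1:
  fixes f :: "real^'n \<Rightarrow> real" and a :: "real^'n"
  assumes mono: "strict_mono_on \<Gamma> f"
    and curve: "\<forall>v\<ge>1. (\<chi> i. if i = j then g v else a $ i * v) \<in> \<Gamma>"
    and level: "\<forall>v\<ge>1. f (\<chi> i. if i = j then g v else a $ i * v) = f a"
    and "a \<in> \<Gamma>"
  shows "g 1 = a $ j"
proof (rule ccontr)
  define p where "p = (\<chi> i. if i = j then g 1 else a $ i * 1)"
  assume "g 1 \<noteq> a $ j"
  then have "p < a \<or> a < p"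
    by (cases "g 1 < a $ j") (auto simp: p_def less_vec_def less_eq_vec_def)
  moreover have "p \<in> \<Gamma>" "f p = f a"
    using curve level by (simp_all add: p_def)
  ultimately show False
    using monotone_onD[OF mono] \<open>a \<in> \<Gamma>\<close> by fastforce
qed

lemma level_curve_antimono:
  fixes f :: "real^'n \<Rightarrow> real" and a :: "real^'n"
  assumes mono: "strict_mono_on \<Gamma> f"
    and curve: "\<forall>v\<ge>1. (\<chi> i. if i = j then g v else a $ i * v) \<in> \<Gamma>"
    and level: "\<forall>v\<ge>1. f (\<chi> i. if i = j then g v else a $ i * v) = y"
    and "\<forall>i. 0 \<le> a $ i" "1 \<le> v" "v \<le> v'"
  shows "g v' \<le> g v"
proof (rule ccontr)
  define p where "p v = (\<chi> i. if i = j then g v else a $ i * v)" for v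
  assume "\<not> g v' \<le> g v"
  then have "p v < p v'"
    using assms(4-6) by (auto simp: p_def less_vec_def less_eq_vec_def mult_left_mono)
  then have "f (p v) < f (p v')"
    using monotone_onD[OF mono] curve assms(5,6) by (simp add: p_def)
  then show False
    using level assms(5,6) by (simp add: p_def)
qed

lemma level_curve_lower_bound:
  fixes a :: "real^'n"
  assumes "\<Gamma> \<subseteq> {x. 0 < (\<Sum>i\<in>UNIV. x $ i)}"
    and "(\<chi> i. if i = j then g v else a $ i * v) \<in> \<Gamma>"
  shows "- (\<Sum>i\<in>UNIV. a $ i) * v < g v - a $ j * v"
proof -
  have "0 < (\<Sum>i\<in>UNIV. (\<chi> i. if i = j then g v else a $ i * v) $ i)"
    using assms by blast
  also have "\<dots> = (\<Sum>i\<in>UNIV. a $ i * v + (if i = j then g v - a $ j * v else 0))"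
    by (rule sum.cong) auto
  also have "\<dots> = (\<Sum>i\<in>UNIV. a $ i) * v + (g v - a $ j * v)"
    by (simp add: sum.distrib sum_distrib_right)
  finally show ?thesis
    by linarith
qed

lemma level_curve_log_autonomous_ode:
  fixes f :: "real^'n \<Rightarrow> real" and a :: "real^'n"
  assumes mono: "strict_mono_on \<Gamma> f"
    and curve: "\<forall>v\<ge>1. (\<chi> i. if i = j then g v else a $ i * v) \<in> \<Gamma>"
    and level: "\<forall>v\<ge>1. f (\<chi> i. if i = j then g v else a $ i * v) = f a"
    and "a \<in> \<Gamma>" "\<forall>i. 0 < a $ i" "0 < K" and g_smooth: "smooth_on g {1..}"
    and w_init: "\<forall>c>1. w c 1 = c"
    and w_ode: "\<forall>c>1. \<forall>s\<ge>1. (w c has_real_derivative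
                  (g (w c s) - a $ j * w c s) / (K * s)) (at s within {1..})"
  shows "log_autonomous_ode (\<lambda>v. (g v - a $ j * v) / K) w"
proof
  have "continuous_on {1..} g"
    using g_smooth unfolding smooth_on_def by (metis Ck_on.simps(1))
  then show "continuous_on {1..} (\<lambda>v. (g v - a $ j * v) / K)"
    using \<open>0 < K\<close> by (intro continuous_intros) auto
  show g_1: "(g 1 - a $ j * 1) / K = 0"
    using level_curve_at_1[OF mono curve level \<open>a \<in> \<Gamma>\<close>] by simp
  show "strict_antimono_on {1..} (\<lambda>v. (g v - a $ j * v) / K)"
  proof (rule monotone_onI)
    fix v v' :: real assume "v \<in> {1..}" "v' \<in> {1..}" "v < v'"
    then have "g v' \<le> g v" "a $ j * v < a $ j * v'"
      using level_curve_antimono[OF mono curve level] \<open>\<forall>i. 0 < a $ i\<close> by (auto intro: less_imp_le)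
    then show "(g v' - a $ j * v') / K < (g v - a $ j * v) / K"
      using \<open>0 < K\<close> by (simp add: divide_strict_right_mono)
  qed
  fix c :: real assume "1 < c"
  then obtain B where "B-lipschitz_on {1..c} g"
    using smooth_on_imp_lipschitz_on_Icc[OF g_smooth, of 1 c] by auto
  have "- ((B + a $ j) / K * (v - 1)) \<le> (g v - a $ j * v) / K" if "v \<in> {1..c}" for v
  proof -
    have "g 1 - g v \<le> B * (v - 1)"
      using lipschitz_onD[OF \<open>B-lipschitz_on {1..c} g\<close>, of v 1] that by (auto simp: dist_real_def)
    then have "- ((B + a $ j) * (v - 1)) \<le> g v - a $ j * v"
      using g_1 \<open>0 < K\<close> by (simp add: algebra_simps)
    from divide_right_mono[OF this, of K] show ?thesis
      using \<open>0 < K\<close> by simp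
  qed
  then show "\<exists>L. \<forall>v\<in>{1..c}. - (L * (v - 1)) \<le> (g v - a $ j * v) / K"
    by blast
qed (use w_init w_ode in \<open>simp_all add: mult.commute\<close>)

lemma first_idx_le: "first_idx \<le> (i::'n::{finite,linorder})"
proof -
  have "first_idx = Min (UNIV::'n set)"
    unfolding first_idx_def by (rule Least_equality) auto
  then show ?thesis
    by (metis Min_le finite UNIV_I)
qed

theorem lemma2p5:
  fixes \<Gamma> :: "((real,'n::{finite,linorder}) vec) set"
    and f :: "(real,'n) vec \<Rightarrow> real"
    and a :: "(real,'n) vec"
    and g :: "real \<Rightarrow> real"
    and \<delta> :: real
    and w :: "real \<Rightarrow> real \<Rightarrow> real"
  assumes \<Gamma>_open: "open \<Gamma>"
    and \<Gamma>_convex: "convex \<Gamma>"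
    and \<Gamma>_cone: "\<forall>x\<in>\<Gamma>. \<forall>t>0. t *\<^sub>R x \<in> \<Gamma>"
    and \<Gamma>_proper: "\<Gamma> \<noteq> UNIV"
    and \<Gamma>_pos: "{x. \<forall>i. x $ i > 0} \<subseteq> \<Gamma>"
    and \<Gamma>_sum: "\<Gamma> \<subseteq> {x. (\<Sum>i\<in>UNIV. x $ i) > 0}"
    and \<Gamma>_sym: "\<forall>\<sigma>. \<sigma> permutes (UNIV::'n::{finite,linorder} set) \<longrightarrow> (\<forall>x\<in>\<Gamma>. (\<chi> i. x $ \<sigma> i) \<in> \<Gamma>)"
    and f_sym: "\<forall>\<sigma>. \<sigma> permutes (UNIV::'n::{finite,linorder} set) \<longrightarrow> (\<forall>x\<in>\<Gamma>. f (\<chi> i. x $ \<sigma> i) = f x)"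
    and f_smooth: "smooth_on f \<Gamma>"
    and f_mono: "\<forall>x\<in>\<Gamma>. \<forall>i. pd i f x > 0"
    and f_bdry: "\<forall>x0\<in>frontier \<Gamma>. Limsup (at x0 within \<Gamma>) (\<lambda>x. ereal (f x)) < 1"
    and a_pos: "0 < a $ first_idx"
    and a_sorted: "\<forall>i j. i \<le> j \<longrightarrow> a $ i \<le> a $ j"
    and a_calA: "in_calA f a"
    and g_smooth: "smooth_on g {1..}"
    and g_in: "\<forall>v\<ge>1. (\<chi> i. if i = first_idx then g v else a $ i * v) \<in> \<Gamma>"
    and g_eq: "\<forall>v\<ge>1. f (\<chi> i. if i = first_idx then g v else a $ i * v) = 1"
    and \<delta>_nonneg: "\<delta> \<ge> 0"
    and w_init: "\<forall>c>1. w c 1 = c"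
    and w_ode: "\<forall>c>1. \<forall>s\<ge>1. (w c has_real_derivative
                  (g (w c s) - a $ first_idx * w c s) / ((2 * a $ last_idx + \<delta>) * s)) (at s within {1..})"
    and c2_gt: "c2 > 1"
    and s_ge: "s \<ge> 1"
  shows "(\<exists>D. ((\<lambda>c. w c s) has_real_derivative D) (at c2) \<and> 0 < D \<and> D \<le> 1)
         \<and> filterlim (\<lambda>c. w c s) at_top at_top"
proof -
  \<comment> \<open>The cone, symmetry and boundary hypotheses
     serve to construct g and w, whose existence is assumed here.\<close>
  define K where "K = 2 * a $ last_idx + \<delta>"
  define h where "h v = (g v - a $ first_idx * v) / K" for v
  have a_pos_all: "\<forall>i. 0 < a $ i"
    using a_pos a_sorted first_idx_le less_le_trans by blast
  then have "a \<in> \<Gamma>" "0 < K"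
    using \<Gamma>_pos \<delta>_nonneg add_pos_nonneg[of "2 * a $ last_idx" \<delta>] by (auto simp: K_def)
  have "strict_mono_on \<Gamma> f"
    using f_mono smooth_on_open_imp_differentiable[OF f_smooth \<Gamma>_open]
    by (intro pd_pos_imp_strict_mono_on[OF \<Gamma>_open \<Gamma>_convex]) auto
  then interpret log_autonomous_ode h w
    unfolding h_def
    using a_calA g_in g_eq \<open>a \<in> \<Gamma>\<close> a_pos_all \<open>0 < K\<close> g_smooth w_init w_ode
    by (intro level_curve_log_autonomous_ode) (auto simp: in_calA_def K_def)
  have "- ((\<Sum>i\<in>UNIV. a $ i) / K * v) \<le> h v" if "1 \<le> v" for v
    using divide_right_mono[OF less_imp_le[OF level_curve_lower_bound[OF \<Gamma>_sum]], of _ _ v a K]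
      g_in that \<open>0 < K\<close> by (simp add: h_def)
  then show ?thesis
    using w_has_derivative_init[OF c2_gt s_ge] w_derivative_init_bounds[OF c2_gt s_ge]
      w_tendsto_at_top[OF _ s_ge] by blast
qed

end
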